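(* In the converse setting below, \[ \sum_{i=1}^n I(X_i;W_1\mid Y_1^{i-1}Y_2^{i-1}S^{i-1})\ \le\ \frac{H(W_1)}{1-\delta_1\delta_2}=\frac{N_1L\log_2 q}{1-\delta_1\delta_2}. \]
   Context: Converse setting. $0<\delta_1,\delta_2<1$. Messages $W_1$ uniform on $\mathbb{F}_q^{LN_1}$ and $W_2$ uniform on $\mathbb{F}_q^{LN_2}$, and Alice's private randomness $\Theta_A$, are mutually independent. Channel states $S_1,\dots,S_n\in\{B,C,BC,\emptyset\}$ are i.i.d., independent of $(W_1,W_2,\Theta_A)$, with Bob receiving with probability $1-\delta_1$ and Calvin with probability $1-\delta_2$, independently. Inputs $X_i=f_i(W_1,W_2,\Theta_A,S^{i-1})\in\mathbb{F}_q^L$ (honest acknowledgments). Outputs: $Y_{1,i}=X_i$ if Bob receives packet $i$, else $\perp$; $Y_{2,i}=X_i$ if Calvin receives packet $i$, else $\perp$. $V^i=(V_1,\dots,V_i)$ ($V^0$ empty). Logarithms base 2. *)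

theory Defs
  imports "HOL-Probability.Probability"
begin

definition entropy_pmf :: "'a pmf \<Rightarrow> real" where
  "entropy_pmf p = - (\<Sum>x\<in>set_pmf p. pmf p x * log 2 (pmf p x))"

definition H :: "'w pmf \<Rightarrow> ('w \<Rightarrow> 'a) \<Rightarrow> real" where
  "H P X = entropy_pmf (map_pmf X P)"

definition cond_MI :: "'w pmf \<Rightarrow> ('w \<Rightarrow> 'a) \<Rightarrow> ('w \<Rightarrow> 'b) \<Rightarrow> ('w \<Rightarrow> 'c) \<Rightarrow> real" where
  "cond_MI P X Y Z =
     H P (\<lambda>w. (X w, Z w)) + H P (\<lambda>w. (Y w, Z w)) - H P (\<lambda>w. (X w, Y w, Z w)) - H P Z"

text \<open>Channel state of one packet: (Bob receives, Calvin receives); independent erasures.\<close>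
type_synonym chstate = "bool \<times> bool"

definition state_pmf :: "real \<Rightarrow> real \<Rightarrow> chstate pmf" where
  "state_pmf \<delta>1 \<delta>2 = pair_pmf (bernoulli_pmf (1 - \<delta>1)) (bernoulli_pmf (1 - \<delta>2))"

text \<open>Sample space: (W1, W2, Theta_A, S) with S = (S_0,...,S_{n-1}) i.i.d. (0-based packet index).
  W1 uniform on F_q^(L N1), W2 uniform on F_q^(L N2), all mutually independent.\<close>
definition sample_pmf ::
  "nat \<Rightarrow> nat \<Rightarrow> nat \<Rightarrow> 't pmf \<Rightarrow> real \<Rightarrow> real \<Rightarrow> nat
     \<Rightarrow> ('a::finite list \<times> 'a list \<times> 't \<times> (nat \<Rightarrow> chstate)) pmf" where
  "sample_pmf L N1 N2 P\<Theta> \<delta>1 \<delta>2 n =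
     do { w1 \<leftarrow> pmf_of_set {xs. length xs = L * N1};
          w2 \<leftarrow> pmf_of_set {xs. length xs = L * N2};
          th \<leftarrow> P\<Theta>;
          s \<leftarrow> Pi_pmf {..<n} (False, False) (\<lambda>_. state_pmf \<delta>1 \<delta>2);
          return_pmf (w1, w2, th, s) }"

text \<open>Channel input X_i = f_i(W1, W2, Theta_A, S^{i-1}); here packet i (0-based) sees states 0..i-1.\<close>
definition Xin :: "(nat \<Rightarrow> 'a list \<Rightarrow> 'a list \<Rightarrow> 't \<Rightarrow> chstate list \<Rightarrow> 'a list) \<Rightarrow> nat
     \<Rightarrow> ('a list \<times> 'a list \<times> 't \<times> (nat \<Rightarrow> chstate)) \<Rightarrow> 'a list" where
  "Xin f i \<omega> = (case \<omega> of (w1, w2, th, s) \<Rightarrow> f i w1 w2 th (map s [0..<i]))"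

text \<open>Outputs: None stands for the erasure symbol.\<close>
definition Y1 :: "(nat \<Rightarrow> 'a list \<Rightarrow> 'a list \<Rightarrow> 't \<Rightarrow> chstate list \<Rightarrow> 'a list) \<Rightarrow> nat
     \<Rightarrow> ('a list \<times> 'a list \<times> 't \<times> (nat \<Rightarrow> chstate)) \<Rightarrow> 'a list option" where
  "Y1 f i \<omega> = (case \<omega> of (w1, w2, th, s) \<Rightarrow> if fst (s i) then Some (Xin f i \<omega>) else None)"

definition Y2 :: "(nat \<Rightarrow> 'a list \<Rightarrow> 'a list \<Rightarrow> 't \<Rightarrow> chstate list \<Rightarrow> 'a list) \<Rightarrow> nat
     \<Rightarrow> ('a list \<times> 'a list \<times> 't \<times> (nat \<Rightarrow> chstate)) \<Rightarrow> 'a list option" where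
  "Y2 f i \<omega> = (case \<omega> of (w1, w2, th, s) \<Rightarrow> if snd (s i) then Some (Xin f i \<omega>) else None)"

definition W1 :: "('a list \<times> 'a list \<times> 't \<times> (nat \<Rightarrow> chstate)) \<Rightarrow> 'a list" where
  "W1 \<omega> = fst \<omega>"

definition S :: "('a list \<times> 'a list \<times> 't \<times> (nat \<Rightarrow> chstate)) \<Rightarrow> nat \<Rightarrow> chstate" where
  "S \<omega> = snd (snd (snd \<omega>))"

end

theory Submission
  imports Defs
begin

(* Write Z_i = (Y_1^i, Y_2^i, S^i) for everything observed before packet i and
   G_i = I(W_1; Z_i) = H(W_1) + H(Z_i) - H(W_1, Z_i).  The state S_i is independent of
   (W_1, Z_i, X_i), and the new observation (Y_{1,i}, Y_{2,i}, S_i) reveals X_i exactly unless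
   both receivers erase it, which happens with probability delta_1 delta_2.  The chain rule
   of entropy therefore gives, for V = W_1 as well as for a constant V,
     H(V, Z_{i+1}) = H(S_i) + delta_1 delta_2 H(V, Z_i) + (1 - delta_1 delta_2) H(V, Z_i, X_i),
   and subtracting the two instances yields the exact identity
     (1 - delta_1 delta_2) I(X_i; W_1 | Z_i) = G_{i+1} - G_i.
   Summing telescopes to G_n - G_0 = G_n <= H(W_1), and H(W_1) = N_1 L log q since W_1 is
   uniform. *)


lemma entropy_map_inj:
  assumes "inj_on g (set_pmf p)"
  shows "entropy_pmf (map_pmf g p) = entropy_pmf p"
proof -
  have "entropy_pmf (map_pmf g p) = - (\<Sum>y\<in>g ` set_pmf p. pmf (map_pmf g p) y * log 2 (pmf (map_pmf g p) y))"
    unfolding entropy_pmf_def set_map_pmf ..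
  also have "\<dots> = - (\<Sum>x\<in>set_pmf p. pmf (map_pmf g p) (g x) * log 2 (pmf (map_pmf g p) (g x)))"
    by (simp only: sum.reindex[OF assms] o_def)
  also have "\<dots> = entropy_pmf p"
    unfolding entropy_pmf_def
  proof (intro arg_cong[where f=uminus] sum.cong refl)
    fix x assume "x \<in> set_pmf p"
    then have "pmf (map_pmf g p) (g x) = pmf p x" by (rule pmf_map_inj[OF assms])
    then show "pmf (map_pmf g p) (g x) * log 2 (pmf (map_pmf g p) (g x)) = pmf p x * log 2 (pmf p x)"
      by simp
  qed
  finally show ?thesis .
qed

lemma H_comp_inj:
  assumes "inj g"
  shows "H P (\<lambda>w. g (X w)) = H P X"
proof -
  have "map_pmf (\<lambda>w. g (X w)) P = map_pmf g (map_pmf X P)" by (simp add: map_pmf_comp)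
  then show ?thesis
    unfolding H_def using entropy_map_inj[OF inj_on_subset[OF assms subset_UNIV]] by simp
qed

lemma H_swap: "H P (\<lambda>w. (X w, Y w)) = H P (\<lambda>w. (Y w, X w))"
  using H_comp_inj[of prod.swap P "\<lambda>w. (Y w, X w)"] by simp

lemma H_const: "H P (\<lambda>w. c) = 0"
  by (simp add: H_def entropy_pmf_def map_pmf_const)

lemma entropy_map_le:
  assumes fin: "finite (set_pmf p)"
  shows "entropy_pmf (map_pmf g p) \<le> entropy_pmf p"
proof -
  let ?A = "set_pmf p"
  define q where "q y = pmf (map_pmf g p) y" for y
  have q: "q y = (\<Sum>x\<in>{x\<in>?A. g x = y}. pmf p x)" for y
  proof -
    have "q y = measure p (g -` {y} \<inter> ?A)"
      unfolding q_def pmf_map by (simp add: measure_Int_set_pmf)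
    also have "\<dots> = (\<Sum>x\<in>{x\<in>?A. g x = y}. pmf p x)"
      using fin by (subst measure_measure_pmf_finite) (auto intro!: sum.cong)
    finally show ?thesis .
  qed
  have le: "pmf p x \<le> q (g x)" if "x \<in> ?A" for x
  proof -
    have "(\<Sum>x\<in>{x}. pmf p x) \<le> (\<Sum>x'\<in>{x'\<in>?A. g x' = g x}. pmf p x')"
      using that fin by (intro sum_mono2) auto
    then show ?thesis by (simp add: q)
  qed
  have "entropy_pmf (map_pmf g p) = - (\<Sum>y\<in>g ` ?A. q y * log 2 (q y))"
    by (simp add: entropy_pmf_def q_def)
  also have "\<dots> = - (\<Sum>y\<in>g ` ?A. \<Sum>x\<in>{x\<in>?A. g x = y}. pmf p x * log 2 (q (g x)))"
    by (simp add: q sum_distrib_right)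
  also have "\<dots> = - (\<Sum>x\<in>?A. pmf p x * log 2 (q (g x)))"
    by (rule arg_cong[where f=uminus], rule sum.image_gen[symmetric], rule fin)
  also have "\<dots> \<le> - (\<Sum>x\<in>?A. pmf p x * log 2 (pmf p x))"
    using le by (intro le_imp_neg_le sum_mono mult_left_mono log_mono) (auto simp: pmf_positive)
  finally show ?thesis unfolding entropy_pmf_def[of p] .
qed

lemma entropy_pmf_of_set:
  assumes "finite A" "A \<noteq> {}"
  shows "entropy_pmf (pmf_of_set A) = log 2 (card A)"
proof -
  have c: "card A > 0" using assms by (simp add: card_gt_0_iff)
  have "entropy_pmf (pmf_of_set A) = - (\<Sum>x\<in>A. (1 / card A) * log 2 (1 / card A))"
    unfolding entropy_pmf_def using assms by (intro arg_cong[where f=uminus] sum.cong) auto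
  also have "\<dots> = log 2 (card A)" using c by (simp add: log_divide)
  finally show ?thesis .
qed

lemma pmf_bind_Pair:
  "pmf (bind_pmf \<mu> (\<lambda>s. map_pmf (Pair s) (E s))) (a, b) = pmf \<mu> a * pmf (E a) b"
proof -
  have "pmf (bind_pmf \<mu> (\<lambda>s. map_pmf (Pair s) (E s))) (a, b)
      = (\<Sum>s\<in>{a}. pmf (map_pmf (Pair s) (E s)) (a, b) * pmf \<mu> s)"
    unfolding pmf_bind
  proof (rule integral_measure_pmf_real)
    fix s assume "pmf (map_pmf (Pair s) (E s)) (a, b) \<noteq> 0"
    then show "s \<in> {a}" by (auto simp: pmf_eq_0_set_pmf)
  qed simp
  also have "\<dots> = pmf \<mu> a * pmf (E a) b"
    using pmf_map_inj'[of "Pair a" "E a" b] by (simp add: inj_on_def)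
  finally show ?thesis .
qed

lemma entropy_chain:
  assumes "finite (set_pmf \<mu>)" "\<And>s. s \<in> set_pmf \<mu> \<Longrightarrow> finite (set_pmf (E s))"
  shows "entropy_pmf (bind_pmf \<mu> (\<lambda>s. map_pmf (Pair s) (E s)))
       = entropy_pmf \<mu> + (\<Sum>s\<in>set_pmf \<mu>. pmf \<mu> s * entropy_pmf (E s))"
proof -
  let ?q = "bind_pmf \<mu> (\<lambda>s. map_pmf (Pair s) (E s))"
  let ?ent = "\<lambda>s. \<Sum>t\<in>set_pmf (E s). pmf (E s) t * log 2 (pmf (E s) t)"
  have set: "set_pmf ?q = Sigma (set_pmf \<mu>) (\<lambda>s. set_pmf (E s))"
    by (auto simp: set_bind_pmf)
  have split: "(\<Sum>t\<in>set_pmf (E s). pmf \<mu> s * pmf (E s) t * log 2 (pmf \<mu> s * pmf (E s) t))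
      = pmf \<mu> s * log 2 (pmf \<mu> s) + pmf \<mu> s * ?ent s" if s: "s \<in> set_pmf \<mu>" for s
  proof -
    have "(\<Sum>t\<in>set_pmf (E s). pmf \<mu> s * pmf (E s) t * log 2 (pmf \<mu> s * pmf (E s) t))
        = (\<Sum>t\<in>set_pmf (E s). pmf \<mu> s * log 2 (pmf \<mu> s) * pmf (E s) t
             + pmf \<mu> s * (pmf (E s) t * log 2 (pmf (E s) t)))"
      using s by (intro sum.cong refl) (simp add: log_mult_pos pmf_positive algebra_simps)
    also have "\<dots> = pmf \<mu> s * log 2 (pmf \<mu> s) + pmf \<mu> s * ?ent s"
      using assms(2)[OF s] by (simp add: sum.distrib sum_distrib_left[symmetric] sum_pmf_eq_1)
    finally show ?thesis .
  qed
  have "entropy_pmf ?q = - (\<Sum>s\<in>set_pmf \<mu>.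
      \<Sum>t\<in>set_pmf (E s). pmf \<mu> s * pmf (E s) t * log 2 (pmf \<mu> s * pmf (E s) t))"
    unfolding entropy_pmf_def set using assms
    by (subst sum.Sigma) (auto intro!: sum.cong simp: pmf_bind_Pair)
  also have "\<dots> = - (\<Sum>s\<in>set_pmf \<mu>. pmf \<mu> s * log 2 (pmf \<mu> s) + pmf \<mu> s * ?ent s)"
    using split by simp
  also have "\<dots> = entropy_pmf \<mu> + (\<Sum>s\<in>set_pmf \<mu>. pmf \<mu> s * entropy_pmf (E s))"
    by (simp add: entropy_pmf_def sum.distrib sum_negf)
  finally show ?thesis .
qed

lemma pair_pmf_as_bind: "pair_pmf A B = bind_pmf A (\<lambda>x. map_pmf (Pair x) B)"
  unfolding pair_pmf_def map_pmf_def by simp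

lemma finite_set_pmf_pair:
  assumes "finite (set_pmf (map_pmf X P))" "finite (range Y)"
  shows "finite (set_pmf (map_pmf (\<lambda>w. (X w, Y w)) P))"
proof (rule finite_subset)
  show "set_pmf (map_pmf (\<lambda>w. (X w, Y w)) P) \<subseteq> set_pmf (map_pmf X P) \<times> range Y" by auto
qed (use assms in blast)


definition mutual_info :: "'w pmf \<Rightarrow> ('w \<Rightarrow> 'a) \<Rightarrow> ('w \<Rightarrow> 'b) \<Rightarrow> real" where
  "mutual_info P X Y = H P X + H P Y - H P (\<lambda>w. (X w, Y w))"

lemma mutual_info_const: "mutual_info P X (\<lambda>w. c) = 0"
  using H_comp_inj[of "\<lambda>x. (x, c)" P X] by (simp add: mutual_info_def H_const inj_def)

(* I(X;Y) <= H(X), since H(Y) <= H(X,Y). *)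
lemma mutual_info_le_H:
  assumes "finite (set_pmf (map_pmf (\<lambda>w. (X w, Y w)) P))"
  shows "mutual_info P X Y \<le> H P X"
proof -
  have "H P Y = entropy_pmf (map_pmf snd (map_pmf (\<lambda>w. (X w, Y w)) P))"
    by (simp add: H_def map_pmf_comp)
  also have "\<dots> \<le> H P (\<lambda>w. (X w, Y w))"
    unfolding H_def by (rule entropy_map_le[OF assms])
  finally show ?thesis by (simp add: mutual_info_def)
qed


definition erase :: "bool \<Rightarrow> 'x \<Rightarrow> 'x option" where
  "erase b x = (if b then Some x else None)"

lemma set_state_pmf:
  assumes "0 < \<delta>1" "\<delta>1 < 1" "0 < \<delta>2" "\<delta>2 < 1"
  shows "set_pmf (state_pmf \<delta>1 \<delta>2) = UNIV"
  using assms by (simp add: state_pmf_def)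

lemma pmf_state_pmf:
  assumes "0 \<le> \<delta>1" "\<delta>1 \<le> 1" "0 \<le> \<delta>2" "\<delta>2 \<le> 1"
  shows "pmf (state_pmf \<delta>1 \<delta>2) (a, b) = (if a then 1 - \<delta>1 else \<delta>1) * (if b then 1 - \<delta>2 else \<delta>2)"
  using assms by (cases a; cases b) (simp_all add: state_pmf_def pmf_pair)

lemma UNIV_chstate: "(UNIV :: chstate set) = {(True, True), (True, False), (False, True), (False, False)}"
  by (auto simp: UNIV_bool)

(* Erasure identity: if the channel state T is independent of (Z, X), then observing T
   together with both erased copies of X adds H(T), and reveals X except with probability
   d1 d2:  H(T, Z, Y_1, Y_2) = H(T) + d1 d2 H(Z) + (1 - d1 d2) H(Z, X). *)
lemma entropy_erasure_observation:
  fixes T :: "'w \<Rightarrow> chstate" and Z :: "'w \<Rightarrow> 'z" and X :: "'w \<Rightarrow> 'x"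
  assumes indep: "map_pmf (\<lambda>w. (T w, (Z w, X w))) P
                    = pair_pmf (state_pmf \<delta>1 \<delta>2) (map_pmf (\<lambda>w. (Z w, X w)) P)"
    and fin: "finite (set_pmf (map_pmf (\<lambda>w. (Z w, X w)) P))"
    and d: "0 < \<delta>1" "\<delta>1 < 1" "0 < \<delta>2" "\<delta>2 < 1"
  shows "H P (\<lambda>w. (T w, (Z w, erase (fst (T w)) (X w), erase (snd (T w)) (X w))))
     = entropy_pmf (state_pmf \<delta>1 \<delta>2) + \<delta>1 * \<delta>2 * H P Z + (1 - \<delta>1 * \<delta>2) * H P (\<lambda>w. (Z w, X w))"
proof -
  let ?\<mu> = "state_pmf \<delta>1 \<delta>2"
  let ?D = "map_pmf (\<lambda>w. (Z w, X w)) P"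
  define obs where "obs s zx = (fst zx, erase (fst s) (snd zx), erase (snd s) (snd zx))"
    for s :: chstate and zx :: "'z \<times> 'x"
  have "map_pmf (\<lambda>w. (T w, (Z w, erase (fst (T w)) (X w), erase (snd (T w)) (X w)))) P
      = map_pmf (\<lambda>(s, zx). (s, obs s zx)) (map_pmf (\<lambda>w. (T w, (Z w, X w))) P)"
    unfolding map_pmf_comp by (simp add: obs_def)
  also have "\<dots> = bind_pmf ?\<mu> (\<lambda>s. map_pmf (Pair s) (map_pmf (obs s) ?D))"
    unfolding indep pair_pmf_as_bind by (simp add: map_bind_pmf map_pmf_comp)
  finally have dist: "map_pmf (\<lambda>w. (T w, (Z w, erase (fst (T w)) (X w), erase (snd (T w)) (X w)))) P
      = bind_pmf ?\<mu> (\<lambda>s. map_pmf (Pair s) (map_pmf (obs s) ?D))" .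
  have erased: "entropy_pmf (map_pmf (obs (False, False)) ?D) = H P Z"
  proof -
    have "map_pmf (obs (False, False)) ?D = map_pmf (\<lambda>z. (z, None, None)) (map_pmf Z P)"
      by (simp add: map_pmf_comp obs_def erase_def)
    then show ?thesis
      using entropy_map_inj[of "\<lambda>z. (z, None, None)" "map_pmf Z P"] by (simp add: inj_on_def H_def)
  qed
  have revealed: "entropy_pmf (map_pmf (obs s) ?D) = H P (\<lambda>w. (Z w, X w))"
    if "s \<noteq> (False, False)" for s
  proof -
    have "inj_on (obs s) (set_pmf ?D)"
      using that by (cases s) (auto simp: inj_on_def obs_def erase_def)
    then show ?thesis by (simp add: entropy_map_inj H_def)
  qed
  have p: "pmf ?\<mu> (a, b) = (if a then 1 - \<delta>1 else \<delta>1) * (if b then 1 - \<delta>2 else \<delta>2)" for a b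
    using d by (intro pmf_state_pmf) auto
  have "entropy_pmf (bind_pmf ?\<mu> (\<lambda>s. map_pmf (Pair s) (map_pmf (obs s) ?D)))
     = entropy_pmf ?\<mu> + (\<Sum>s\<in>set_pmf ?\<mu>. pmf ?\<mu> s * entropy_pmf (map_pmf (obs s) ?D))"
    by (rule entropy_chain) (use fin in auto)
  then show ?thesis
    unfolding H_def[of P "\<lambda>w. (T w, (Z w, erase (fst (T w)) (X w), erase (snd (T w)) (X w)))"] dist set_state_pmf[OF d] UNIV_chstate
    using erased revealed[of "(True, True)"] revealed[of "(True, False)"] revealed[of "(False, True)"]
    by (simp add: p algebra_simps)
qed


definition sample_on ::
  "nat \<Rightarrow> nat \<Rightarrow> nat \<Rightarrow> 't pmf \<Rightarrow> real \<Rightarrow> real \<Rightarrow> nat set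
     \<Rightarrow> ('a::finite list \<times> 'a list \<times> 't \<times> (nat \<Rightarrow> chstate)) pmf" where
  "sample_on L N1 N2 P\<Theta> \<delta>1 \<delta>2 A =
     do { w1 \<leftarrow> pmf_of_set {xs. length xs = L * N1};
          w2 \<leftarrow> pmf_of_set {xs. length xs = L * N2};
          th \<leftarrow> P\<Theta>;
          s \<leftarrow> Pi_pmf A (False, False) (\<lambda>_. state_pmf \<delta>1 \<delta>2);
          return_pmf (w1, w2, th, s) }"

definition set_state :: "nat \<Rightarrow> chstate
     \<Rightarrow> ('a list \<times> 'a list \<times> 't \<times> (nat \<Rightarrow> chstate)) \<Rightarrow> ('a list \<times> 'a list \<times> 't \<times> (nat \<Rightarrow> chstate))" where
  "set_state i y \<omega> = (case \<omega> of (w1, w2, th, s) \<Rightarrow> (w1, w2, th, s(i := y)))"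

lemma sample_on_insert:
  assumes "finite A" "i \<notin> A"
  shows "sample_on L N1 N2 P\<Theta> \<delta>1 \<delta>2 (insert i A)
    = bind_pmf (state_pmf \<delta>1 \<delta>2) (\<lambda>y. map_pmf (set_state i y) (sample_on L N1 N2 P\<Theta> \<delta>1 \<delta>2 A))"
  unfolding sample_on_def Pi_pmf_insert'[OF assms]
  by (simp add: bind_assoc_pmf bind_return_pmf map_bind_pmf set_state_def
      bind_commute_pmf[where A="state_pmf \<delta>1 \<delta>2"])

lemma S_set_state: "S (set_state i y \<omega>) j = (if j = i then y else S \<omega> j)"
  by (cases \<omega>) (simp add: S_def set_state_def)

lemma W1_set_state: "W1 (set_state i y \<omega>) = W1 \<omega>"
  by (cases \<omega>) (simp add: W1_def set_state_def)

lemma state_indep: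
  fixes P\<Theta> :: "'t pmf"
  assumes "finite A" "i \<notin> A" and inv: "\<And>\<omega> y. V (set_state i y \<omega>) = V \<omega>"
  shows "map_pmf (\<lambda>\<omega>. (S \<omega> i, V \<omega>)) (sample_on L N1 N2 P\<Theta> \<delta>1 \<delta>2 (insert i A))
     = pair_pmf (state_pmf \<delta>1 \<delta>2) (map_pmf V (sample_on L N1 N2 P\<Theta> \<delta>1 \<delta>2 (insert i A)))"
proof -
  let ?QA = "sample_on L N1 N2 P\<Theta> \<delta>1 \<delta>2 A :: ('a::finite list \<times> 'a list \<times> 't \<times> (nat \<Rightarrow> chstate)) pmf"
  note resample = sample_on_insert[OF assms(1,2)]
  have "map_pmf V (sample_on L N1 N2 P\<Theta> \<delta>1 \<delta>2 (insert i A)) = map_pmf V ?QA"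
    unfolding resample by (simp add: map_bind_pmf map_pmf_comp inv)
  moreover have "map_pmf (\<lambda>\<omega>. (S \<omega> i, V \<omega>)) (sample_on L N1 N2 P\<Theta> \<delta>1 \<delta>2 (insert i A))
      = bind_pmf (state_pmf \<delta>1 \<delta>2) (\<lambda>y. map_pmf (Pair y) (map_pmf V ?QA))"
    unfolding resample by (simp add: map_bind_pmf map_pmf_comp inv S_set_state)
  ultimately show ?thesis by (simp add: pair_pmf_as_bind)
qed

lemma finite_lists_of_length: "finite {xs::'a::finite list. length xs = k}"
  using finite_lists_length_eq[of "UNIV::'a set" k] by simp

lemma nonempty_lists_of_length: "{xs::'a list. length xs = k} \<noteq> {}"
proof -
  have "replicate k undefined \<in> {xs::'a list. length xs = k}" by simp
  then show ?thesis by blast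
qed

lemma W1_uniform:
  fixes P\<Theta> :: "'t pmf" and L N1 N2 n :: nat and \<delta>1 \<delta>2 :: real
  defines "P \<equiv> sample_pmf L N1 N2 P\<Theta> \<delta>1 \<delta>2 n :: ('a::finite list \<times> 'a list \<times> 't \<times> (nat \<Rightarrow> chstate)) pmf"
  shows "finite (set_pmf (map_pmf W1 P))"
    and "H P W1 = real (N1 * L) * log 2 (real CARD('a))"
proof -
  have W1: "map_pmf W1 P = pmf_of_set {xs. length xs = L * N1}"
    by (simp add: P_def sample_pmf_def W1_def map_bind_pmf bind_return_pmf')
  then show "finite (set_pmf (map_pmf W1 P))"
    using finite_lists_of_length
    by (simp only: set_pmf_of_set[OF nonempty_lists_of_length finite_lists_of_length])
  have "card {xs::'a list. length xs = k} = CARD('a) ^ k" for k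
    using card_lists_length_eq[of "UNIV::'a set" k] by simp
  then show "H P W1 = real (N1 * L) * log 2 (real CARD('a))"
    unfolding H_def W1 entropy_pmf_of_set[OF finite_lists_of_length nonempty_lists_of_length]
    by (simp add: log_nat_power algebra_simps)
qed


definition history where
  "history f i \<omega> = (map (\<lambda>j. Y1 f j \<omega>) [0..<i], map (\<lambda>j. Y2 f j \<omega>) [0..<i], map (S \<omega>) [0..<i])"

lemma Y1_erase: "Y1 f i \<omega> = erase (fst (S \<omega> i)) (Xin f i \<omega>)"
  by (cases \<omega>) (simp add: Y1_def S_def erase_def)

lemma Y2_erase: "Y2 f i \<omega> = erase (snd (S \<omega> i)) (Xin f i \<omega>)"
  by (cases \<omega>) (simp add: Y2_def S_def erase_def)

lemma Xin_set_state: "j \<le> i \<Longrightarrow> Xin f j (set_state i y \<omega>) = Xin f j \<omega>"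
  by (cases \<omega>) (auto simp: Xin_def set_state_def intro!: arg_cong[where f="f j _ _ _"])

lemma history_set_state: "history f i (set_state i y \<omega>) = history f i \<omega>"
  by (simp add: history_def Y1_erase Y2_erase S_set_state Xin_set_state)

definition append_obs :: "chstate \<Rightarrow> ('y list \<times> 'y list \<times> chstate list) \<Rightarrow> 'y \<Rightarrow> 'y
     \<Rightarrow> 'y list \<times> 'y list \<times> chstate list" where
  "append_obs s z y1 y2 = (case z of (a, b, c) \<Rightarrow> (a @ [y1], b @ [y2], c @ [s]))"

lemma append_obs_inject:
  "append_obs s z y1 y2 = append_obs s' z' y1' y2' \<longleftrightarrow> s = s' \<and> z = z' \<and> y1 = y1' \<and> y2 = y2'"
  by (cases z; cases z') (auto simp: append_obs_def)

lemma history_Suc: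
  "history f (Suc i) \<omega>
     = append_obs (S \<omega> i) (history f i \<omega>) (erase (fst (S \<omega> i)) (Xin f i \<omega>)) (erase (snd (S \<omega> i)) (Xin f i \<omega>))"
  by (simp add: history_def append_obs_def Y1_erase Y2_erase)

lemma length_Xin:
  assumes "\<And>i w1 w2 th ss. length (f i w1 w2 th ss) = L"
  shows "length (Xin f i \<omega>) = L"
  using assms by (cases \<omega>) (simp add: Xin_def)

lemma finite_range_Xin:
  fixes f :: "nat \<Rightarrow> 'a::finite list \<Rightarrow> 'a list \<Rightarrow> 't \<Rightarrow> chstate list \<Rightarrow> 'a list"
  assumes "\<And>i w1 w2 th ss. length (f i w1 w2 th ss) = L"
  shows "finite (range (Xin f i))"
proof (rule finite_subset[OF _ finite_lists_of_length])
  show "range (Xin f i) \<subseteq> {xs. length xs = L}"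
    using length_Xin[OF assms] by auto
qed

lemma finite_range_history:
  fixes f :: "nat \<Rightarrow> 'a::finite list \<Rightarrow> 'a list \<Rightarrow> 't \<Rightarrow> chstate list \<Rightarrow> 'a list"
  assumes "\<And>i w1 w2 th ss. length (f i w1 w2 th ss) = L"
  shows "finite (range (history f i))"
proof -
  let ?O = "insert None (Some ` {xs::'a list. length xs = L})"
  let ?Lists = "\<lambda>A. {xs. set xs \<subseteq> A \<and> length xs = i}"
  have "finite (?Lists ?O \<times> ?Lists ?O \<times> ?Lists (UNIV :: chstate set))"
    by (intro finite_cartesian_product finite_lists_length_eq) (simp_all add: finite_lists_of_length)
  moreover have "range (history f i) \<subseteq> ?Lists ?O \<times> ?Lists ?O \<times> ?Lists UNIV"
    by (auto simp: history_def Y1_erase Y2_erase erase_def length_Xin[OF assms])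
  ultimately show ?thesis by (rule finite_subset[rotated])
qed

lemma H_history_Suc:
  fixes f :: "nat \<Rightarrow> 'a::finite list \<Rightarrow> 'a list \<Rightarrow> 't \<Rightarrow> chstate list \<Rightarrow> 'a list"
    and P\<Theta> :: "'t pmf" and L N1 N2 n :: nat and \<delta>1 \<delta>2 :: real
    and V :: "'a list \<times> 'a list \<times> 't \<times> (nat \<Rightarrow> chstate) \<Rightarrow> 'v"
  assumes d: "0 < \<delta>1" "\<delta>1 < 1" "0 < \<delta>2" "\<delta>2 < 1"
    and flen: "\<And>i w1 w2 th ss. length (f i w1 w2 th ss) = L"
    and "i < n"
    and V_inv: "\<And>\<omega> y. V (set_state i y \<omega>) = V \<omega>"
  defines "P \<equiv> sample_pmf L N1 N2 P\<Theta> \<delta>1 \<delta>2 n"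
  assumes V_fin: "finite (set_pmf (map_pmf V P))"
  shows "H P (\<lambda>\<omega>. (V \<omega>, history f (Suc i) \<omega>))
     = entropy_pmf (state_pmf \<delta>1 \<delta>2) + \<delta>1 * \<delta>2 * H P (\<lambda>\<omega>. (V \<omega>, history f i \<omega>))
       + (1 - \<delta>1 * \<delta>2) * H P (\<lambda>\<omega>. ((V \<omega>, history f i \<omega>), Xin f i \<omega>))"
proof -
  let ?Z = "\<lambda>\<omega>. (V \<omega>, history f i \<omega>)"
  let ?new_obs = "\<lambda>\<omega>. (S \<omega> i, (?Z \<omega>, erase (fst (S \<omega> i)) (Xin f i \<omega>), erase (snd (S \<omega> i)) (Xin f i \<omega>)))"
  have P: "P = sample_on L N1 N2 P\<Theta> \<delta>1 \<delta>2 (insert i ({..<n} - {i}))"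
    using \<open>i < n\<close> by (simp add: P_def sample_pmf_def sample_on_def insert_absorb)
  have indep: "map_pmf (\<lambda>\<omega>. (S \<omega> i, (?Z \<omega>, Xin f i \<omega>))) P
      = pair_pmf (state_pmf \<delta>1 \<delta>2) (map_pmf (\<lambda>\<omega>. (?Z \<omega>, Xin f i \<omega>)) P)"
    unfolding P by (rule state_indep) (auto simp: V_inv history_set_state Xin_set_state)
  have fin: "finite (set_pmf (map_pmf (\<lambda>\<omega>. (?Z \<omega>, Xin f i \<omega>)) P))"
    by (intro finite_set_pmf_pair V_fin finite_range_history[OF flen] finite_range_Xin[OF flen])
  define extend where "extend x = (case x of (s, ((v, z), y1, y2)) \<Rightarrow> (v, append_obs s z y1 y2))"
    for x :: "chstate \<times> (('v \<times> 'a list option list \<times> 'a list option list \<times> chstate list)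
      \<times> 'a list option \<times> 'a list option)"
  have "inj extend" by (auto simp: inj_def extend_def append_obs_inject)
  have "H P (\<lambda>\<omega>. (V \<omega>, history f (Suc i) \<omega>)) = H P (\<lambda>\<omega>. extend (?new_obs \<omega>))"
    by (simp add: history_Suc extend_def)
  also have "\<dots> = H P ?new_obs"
    by (rule H_comp_inj) fact
  also have "\<dots> = entropy_pmf (state_pmf \<delta>1 \<delta>2) + \<delta>1 * \<delta>2 * H P ?Z
      + (1 - \<delta>1 * \<delta>2) * H P (\<lambda>\<omega>. (?Z \<omega>, Xin f i \<omega>))"
    by (rule entropy_erasure_observation[OF indep fin d])
  finally show ?thesis .
qed

(* Pairing with a constant does not change the entropy; used to specialise H_history_Suc
   to the history alone. *)
lemma H_const_left: "H P (\<lambda>w. (c, X w)) = H P X"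
  by (rule H_comp_inj) (simp add: inj_def)

lemma H_const_left_assoc: "H P (\<lambda>w. ((c, X w), Y w)) = H P (\<lambda>w. (X w, Y w))"
  using H_comp_inj[of "\<lambda>(x, y). ((c, x), y)" P "\<lambda>w. (X w, Y w)"] by (simp add: inj_def)

lemma mutual_info_history_increment:
  fixes f :: "nat \<Rightarrow> 'a::finite list \<Rightarrow> 'a list \<Rightarrow> 't \<Rightarrow> chstate list \<Rightarrow> 'a list"
    and P\<Theta> :: "'t pmf" and L N1 N2 n :: nat and \<delta>1 \<delta>2 :: real
  assumes d: "0 < \<delta>1" "\<delta>1 < 1" "0 < \<delta>2" "\<delta>2 < 1"
    and flen: "\<And>i w1 w2 th ss. length (f i w1 w2 th ss) = L"
    and "i < n"
  defines "P \<equiv> sample_pmf L N1 N2 P\<Theta> \<delta>1 \<delta>2 n"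
  shows "(1 - \<delta>1 * \<delta>2) * cond_MI P (Xin f i) W1 (history f i)
       = mutual_info P W1 (history f (Suc i)) - mutual_info P W1 (history f i)"
proof -
  note step = H_history_Suc[where f = f, OF d flen \<open>i < n\<close>]
  have with_W1: "H P (\<lambda>\<omega>. (W1 \<omega>, history f (Suc i) \<omega>)) = entropy_pmf (state_pmf \<delta>1 \<delta>2)
      + \<delta>1 * \<delta>2 * H P (\<lambda>\<omega>. (W1 \<omega>, history f i \<omega>))
      + (1 - \<delta>1 * \<delta>2) * H P (\<lambda>\<omega>. ((W1 \<omega>, history f i \<omega>), Xin f i \<omega>))"
    unfolding P_def by (rule step[OF W1_set_state W1_uniform(1)])
  have without_W1: "H P (history f (Suc i)) = entropy_pmf (state_pmf \<delta>1 \<delta>2)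
      + \<delta>1 * \<delta>2 * H P (history f i) + (1 - \<delta>1 * \<delta>2) * H P (\<lambda>\<omega>. (history f i \<omega>, Xin f i \<omega>))"
    using step[of "\<lambda>_. ()"] unfolding P_def H_const_left H_const_left_assoc by simp
  show ?thesis
    unfolding cond_MI_def mutual_info_def with_W1 without_W1
      H_swap[of P "Xin f i" "\<lambda>\<omega>. (W1 \<omega>, history f i \<omega>)"] H_swap[of P "Xin f i" "history f i"]
    by (simp add: algebra_simps)
qed

lemma sum_le_by_telescoping:
  fixes a G :: "nat \<Rightarrow> real"
  assumes "c > 0" "\<And>i. i < n \<Longrightarrow> c * a i = G (Suc i) - G i" "G 0 = 0" "G n \<le> B"
  shows "(\<Sum>i<n. a i) \<le> B / c"
proof -
  have "c * (\<Sum>i<n. a i) = (\<Sum>i<n. G (Suc i) - G i)"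
    using assms(2) by (simp add: sum_distrib_left)
  also have "\<dots> = G n" using assms(3) by (simp add: sum_lessThan_telescope)
  finally show ?thesis using assms(1,4) by (simp add: pos_le_divide_eq mult.commute)
qed


theorem lemma8:
  fixes f :: "nat \<Rightarrow> 'a::{finite,field} list \<Rightarrow> 'a list \<Rightarrow> 't \<Rightarrow> chstate list \<Rightarrow> 'a list"
    and P\<Theta> :: "'t pmf"
    and L N1 N2 n :: nat
    and \<delta>1 \<delta>2 :: real
  assumes "0 < \<delta>1" "\<delta>1 < 1" "0 < \<delta>2" "\<delta>2 < 1"
    and "\<And>i w1 w2 th ss. length (f i w1 w2 th ss) = L"
  defines "P \<equiv> sample_pmf L N1 N2 P\<Theta> \<delta>1 \<delta>2 n"
  shows "(\<Sum>i<n. cond_MI P (Xin f i) W1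
             (\<lambda>\<omega>. (map (\<lambda>j. Y1 f j \<omega>) [0..<i], map (\<lambda>j. Y2 f j \<omega>) [0..<i], map (S \<omega>) [0..<i])))
           \<le> H P W1 / (1 - \<delta>1 * \<delta>2)
       \<and> H P W1 / (1 - \<delta>1 * \<delta>2) = real (N1 * L) * log 2 (real CARD('a)) / (1 - \<delta>1 * \<delta>2)"
proof -
  define G where "G i = mutual_info P W1 (history f i)" for i
  have W1_fin: "finite (set_pmf (map_pmf W1 P))"
    unfolding P_def by (rule W1_uniform(1))
  have "\<delta>1 * \<delta>2 < 1 * 1" using assms(1-4) by (intro mult_strict_mono) auto
  then have "1 - \<delta>1 * \<delta>2 > 0" by simp
  moreover have "(1 - \<delta>1 * \<delta>2) * cond_MI P (Xin f i) W1 (history f i) = G (Suc i) - G i"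
    if "i < n" for i
    unfolding G_def P_def by (rule mutual_info_history_increment[OF assms(1-5) that])
  moreover have "G 0 = 0"
    unfolding G_def history_def by (simp add: mutual_info_const)
  moreover have "G n \<le> H P W1"
    unfolding G_def
    by (intro mutual_info_le_H finite_set_pmf_pair W1_fin finite_range_history[OF assms(5)])
  ultimately have "(\<Sum>i<n. cond_MI P (Xin f i) W1 (history f i)) \<le> H P W1 / (1 - \<delta>1 * \<delta>2)"
    by (rule sum_le_by_telescoping)
  then show ?thesis
    unfolding history_def P_def W1_uniform(2) by (rule conjI[OF _ refl])
qed

end
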